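(* Let $X$ be any one of the sequences $F,L,J,j,P,Q$. For integers $a,b,c,d,e$ put $$\Delta=X_{d-a}X_{e-b}-X_{e-a}X_{d-b},\quad \Delta_1=X_{d-c}X_{e-b}-X_{e-c}X_{d-b},\quad \Delta_2=X_{d-a}X_{e-c}-X_{e-a}X_{d-c}.$$ Then for every nonnegative integer $k$ and every integer $m$: if $\Delta_2\neq0$, $$\sum_{r=0}^k\binom kr\left(\frac{\Delta_1}{\Delta_2}\right)^rX_{m-(b-c)k+(b-a)r}=\left(\frac{\Delta}{\Delta_2}\right)^kX_m\quad\text{and}\quad \sum_{r=0}^k\binom kr\left(\frac{-\Delta}{\Delta_2}\right)^rX_{m+(a-b)k+(b-c)r}=\left(\frac{\Delta_1}{-\Delta_2}\right)^kX_m;$$ and if $\Delta_1\neq0$, $$\sum_{r=0}^k\binom kr\left(\frac{-\Delta}{\Delta_1}\right)^rX_{m+(b-a)k+(a-c)r}=\left(\frac{\Delta_2}{-\Delta_1}\right)^kX_m.$$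
   Context: All sequences are indexed by $n\in\mathbb Z$. Fibonacci numbers $F_n$ and Lucas numbers $L_n$: $F_n=F_{n-1}+F_{n-2}$, $L_n=L_{n-1}+L_{n-2}$ for all $n\in\mathbb Z$, with $F_0=0,F_1=1,L_0=2,L_1=1$ (so $F_{-n}=(-1)^{n-1}F_n$, $L_{-n}=(-1)^nL_n$). Jacobsthal numbers $J_n$ and Jacobsthal–Lucas numbers $j_n$: $J_n=J_{n-1}+2J_{n-2}$, $j_n=j_{n-1}+2j_{n-2}$ for all $n\in\mathbb Z$, with $J_0=0,J_1=1,j_0=2,j_1=1$ (so $J_{-n}=(-1)^{n-1}2^{-n}J_n$, $j_{-n}=(-1)^n2^{-n}j_n$, rational for negative index). Pell numbers $P_n$ and Pell–Lucas numbers $Q_n$: $P_n=2P_{n-1}+P_{n-2}$, $Q_n=2Q_{n-1}+Q_{n-2}$ for all $n\in\mathbb Z$, with $P_0=0,P_1=1,Q_0=2,Q_1=2$ (so $P_{-n}=(-1)^{n-1}P_n$, $Q_{-n}=(-1)^nQ_n$). Here $0^0=1$. *)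

theory Defs
  imports Complex_Main
begin

fun fwd_seq :: "real \<Rightarrow> real \<Rightarrow> real \<Rightarrow> real \<Rightarrow> nat \<Rightarrow> real" where
  "fwd_seq p q x0 x1 0 = x0"
| "fwd_seq p q x0 x1 (Suc 0) = x1"
| "fwd_seq p q x0 x1 (Suc (Suc n)) = p * fwd_seq p q x0 x1 (Suc n) + q * fwd_seq p q x0 x1 n"

text \<open>bwd_seq p q x0 x1 n is X_(-n); from X_(k) = p X_(k-1) + q X_(k-2) we get
  X_(-(n+2)) = (X_(-n) - p X_(-(n+1))) / q.\<close>
fun bwd_seq :: "real \<Rightarrow> real \<Rightarrow> real \<Rightarrow> real \<Rightarrow> nat \<Rightarrow> real" where
  "bwd_seq p q x0 x1 0 = x0"
| "bwd_seq p q x0 x1 (Suc 0) = (x1 - p * x0) / q"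
| "bwd_seq p q x0 x1 (Suc (Suc n)) = (bwd_seq p q x0 x1 n - p * bwd_seq p q x0 x1 (Suc n)) / q"

definition lin_seq :: "real \<Rightarrow> real \<Rightarrow> real \<Rightarrow> real \<Rightarrow> int \<Rightarrow> real" where
  "lin_seq p q x0 x1 n = (if 0 \<le> n then fwd_seq p q x0 x1 (nat n) else bwd_seq p q x0 x1 (nat (- n)))"

definition Fib :: "int \<Rightarrow> real" where "Fib = lin_seq 1 1 0 1"
definition Luc :: "int \<Rightarrow> real" where "Luc = lin_seq 1 1 2 1"
definition Jac :: "int \<Rightarrow> real" where "Jac = lin_seq 1 2 0 1"
definition JacL :: "int \<Rightarrow> real" where "JacL = lin_seq 1 2 2 1"
definition Pell :: "int \<Rightarrow> real" where "Pell = lin_seq 2 1 0 1"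
definition PellL :: "int \<Rightarrow> real" where "PellL = lin_seq 2 1 2 2"

end

theory Submission
  imports Defs
begin

text \<open>
  For a solution X of X(n+2) = p X(n+1) + q X(n) with p, q > 0, the sequence
  n \<mapsto> \<Delta>1 X(n-a) + \<Delta>2 X(n-b) - \<Delta> X(n-c) is again a solution, and the determinants
  \<Delta>, \<Delta>1, \<Delta>2 are chosen exactly so that it vanishes at n = d and n = e. A solution
  with two distinct zeros is a multiple of a shift of the fundamental solution
  (U 0 = 0, U 1 = 1), which has no other zeros when p, q > 0; hence the three-term
  relation \<Delta>1 X(n-a) + \<Delta>2 X(n-b) = \<Delta> X(n-c) holds for all n as soon as \<Delta>1 or \<Delta>2
  is nonzero. Each identity of the theorem is the k-fold iterate of a rescaled and
  shifted form of this relation, and iterating a two-term shift relation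
  Y(n+\<alpha>) + t Y(n+\<beta>) = s Y(n) k times produces the binomial sum.
\<close>

definition lin_rec :: "real \<Rightarrow> real \<Rightarrow> (int \<Rightarrow> real) \<Rightarrow> bool" where
  "lin_rec p q Y \<longleftrightarrow> (\<forall>n. Y (n + 2) = p * Y (n + 1) + q * Y n)"

lemma lin_seq_of_nat: "lin_seq p q x0 x1 (int n) = fwd_seq p q x0 x1 n"
  by (simp add: lin_seq_def)

lemma lin_seq_minus_of_nat: "lin_seq p q x0 x1 (- int n) = bwd_seq p q x0 x1 n"
  by (cases "n = 0") (simp_all add: lin_seq_def)

lemma lin_rec_lin_seq:
  assumes "q \<noteq> 0"
  shows "lin_rec p q (lin_seq p q x0 x1)"
  unfolding lin_rec_def
proof
  fix n :: int
  consider (nonneg) "n \<ge> 0" | (minus_one) "n = -1" | (below) "n \<le> -2"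
    by linarith
  then show "lin_seq p q x0 x1 (n + 2) = p * lin_seq p q x0 x1 (n + 1) + q * lin_seq p q x0 x1 n"
  proof cases
    case nonneg
    then obtain k where k: "n = int k" by (metis nonneg_eq_int)
    have "n + 2 = int (Suc (Suc k))" "n + 1 = int (Suc k)" using k by simp_all
    then show ?thesis using k by (simp only: lin_seq_of_nat) simp
  next
    case minus_one
    then show ?thesis using assms by (simp add: lin_seq_def field_simps)
  next
    case below
    define k where "k = nat (- n) - 2"
    have "n = - int (Suc (Suc k))" "n + 2 = - int k" "n + 1 = - int (Suc k)"
      using below by (simp_all add: k_def)
    then show ?thesis using assms by (simp only: lin_seq_minus_of_nat) (simp add: field_simps)
  qed
qed

lemma lin_rec_shift:
  assumes "lin_rec p q Y"
  shows "lin_rec p q (\<lambda>n. Y (n + h))"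
  using assms unfolding lin_rec_def by (metis add.commute add.left_commute)

lemma lin_rec_eqI:
  assumes "q \<noteq> 0" and Y: "lin_rec p q Y" and W: "lin_rec p q W"
    and "Y 0 = W 0" and "Y 1 = W 1"
  shows "Y n = W n"
proof -
  have upward: "Y (int k) = W (int k) \<and> Y (int k + 1) = W (int k + 1)" for k
  proof (induction k)
    case 0
    then show ?case using assms by simp
  next
    case (Suc k)
    have "Y (int k + 2) = W (int k + 2)"
      using Y W Suc unfolding lin_rec_def by metis
    moreover have "int (Suc k) = int k + 1" "int (Suc k) + 1 = int k + 2" by simp_all
    ultimately show ?case using Suc by metis
  qed
  have downward: "Y (- int k) = W (- int k) \<and> Y (- int k + 1) = W (- int k + 1)" for k
  proof (induction k)
    case 0
    then show ?case using assms by simp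
  next
    case (Suc k)
    let ?m = "- int (Suc k)"
    have "?m + 2 = - int k + 1" "?m + 1 = - int k" by auto
    moreover have "Y (?m + 2) = p * Y (?m + 1) + q * Y ?m" "W (?m + 2) = p * W (?m + 1) + q * W ?m"
      using Y W unfolding lin_rec_def by blast+
    ultimately have "q * Y ?m = q * W ?m" using Suc by auto
    then show ?case using Suc \<open>q \<noteq> 0\<close> by simp
  qed
  show ?thesis
    using upward[of "nat n"] downward[of "nat (- n)"] by (cases "n \<ge> 0") simp_all
qed

lemma fwd_seq_fundamental_pos:
  assumes "p > 0" "q > 0"
  shows "fwd_seq p q 0 1 n \<ge> 0 \<and> fwd_seq p q 0 1 (Suc n) > 0"
  using assms by (induction n) (auto intro!: add_pos_nonneg mult_nonneg_nonneg)

text \<open>Going backwards the fundamental solution alternates in sign, since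
  q U(-(n+2)) = U(-n) - p U(-(n+1)) has the sign opposite to U(-(n+1)).\<close>

lemma bwd_seq_fundamental_alternating:
  assumes "p > 0" "q > 0"
  shows "bwd_seq p q 0 1 n * bwd_seq p q 0 1 (Suc n) \<le> 0 \<and> bwd_seq p q 0 1 (Suc n) \<noteq> 0"
proof (induction n)
  case 0
  then show ?case using assms by simp
next
  case (Suc n)
  let ?a = "bwd_seq p q 0 1 n" and ?b = "bwd_seq p q 0 1 (Suc n)"
  have "p * (?b * ?b) > 0" using Suc assms by (auto simp: zero_less_mult_iff)
  then have "?b * (?a - p * ?b) < 0" using Suc by (simp add: algebra_simps)
  then have "?b * ((?a - p * ?b) / q) < 0"
    using assms by (simp add: mult_neg_pos divide_neg_pos times_divide_eq_right)
  then show ?case by auto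
qed

lemma lin_seq_fundamental_nonzero:
  assumes "p > 0" "q > 0" "n \<noteq> 0"
  shows "lin_seq p q 0 1 n \<noteq> 0"
proof (cases "n > 0")
  case True
  then have "n = int (Suc (nat n - 1))" by simp
  then show ?thesis using fwd_seq_fundamental_pos[OF assms(1,2)] by (metis lin_seq_of_nat less_le)
next
  case False
  then have "n = - int (Suc (nat (- n) - 1))" using assms(3) by simp
  then show ?thesis using bwd_seq_fundamental_alternating[OF assms(1,2)] by (metis lin_seq_minus_of_nat)
qed

lemma lin_rec_eq_0_if_two_zeros:
  assumes "p > 0" "q > 0" and Y: "lin_rec p q Y"
    and "Y d = 0" "Y e = 0" "d \<noteq> e"
  shows "Y n = 0"
proof -
  define U where "U = lin_seq p q 0 1"
  have "lin_rec p q U" using lin_rec_lin_seq \<open>q > 0\<close> unfolding U_def by simp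
  then have scaled: "lin_rec p q (\<lambda>n. Y (d + 1) * U n)"
    unfolding lin_rec_def by (simp add: algebra_simps)
  have multiple: "Y (n + d) = Y (d + 1) * U n" for n
    using lin_rec_eqI[OF _ lin_rec_shift[OF Y] scaled] assms
    by (simp add: U_def lin_seq_def add.commute)
  have "U (e - d) \<noteq> 0" unfolding U_def using lin_seq_fundamental_nonzero assms by simp
  then have "Y (d + 1) = 0" using multiple[of "e - d"] \<open>Y e = 0\<close> by simp
  then show ?thesis using multiple[of "n - d"] by simp
qed

lemma lin_rec_three_term:
  assumes "p > 0" "q > 0" and X: "lin_rec p q X" and "d \<noteq> e"
  shows "(X (d - c) * X (e - b) - X (e - c) * X (d - b)) * X (n - a)
       + (X (d - a) * X (e - c) - X (e - a) * X (d - c)) * X (n - b)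
       = (X (d - a) * X (e - b) - X (e - a) * X (d - b)) * X (n - c)"
proof -
  define L where "L n = (X (d - c) * X (e - b) - X (e - c) * X (d - b)) * X (n - a)
       + (X (d - a) * X (e - c) - X (e - a) * X (d - c)) * X (n - b)
       - (X (d - a) * X (e - b) - X (e - a) * X (d - b)) * X (n - c)" for n
  have step: "X (n + 2 - h) = p * X (n + 1 - h) + q * X (n - h)" for n h
    using lin_rec_shift[OF X, of "- h"] unfolding lin_rec_def by (simp add: algebra_simps)
  have "lin_rec p q L"
    unfolding lin_rec_def L_def by (simp add: step algebra_simps)
  moreover have "L d = 0" "L e = 0"
    unfolding L_def by (simp_all add: algebra_simps)
  ultimately have "L n = 0" using lin_rec_eq_0_if_two_zeros assms by blast
  then show ?thesis unfolding L_def by simp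
qed

lemma binomial_sum_of_shift_relation:
  fixes Y :: "int \<Rightarrow> 'a :: comm_semiring_1"
  assumes rel: "\<And>n. Y (n + \<alpha>) + t * Y (n + \<beta>) = s * Y n"
  shows "(\<Sum>r = 0..k. of_nat (k choose r) * t ^ r * Y (n + \<alpha> * int k + (\<beta> - \<alpha>) * int r))
       = s ^ k * Y n"
proof (induction k arbitrary: n)
  case 0
  then show ?case by simp
next
  case (Suc k)
  define g where "g i = Y (n + \<alpha> + \<alpha> * int k + (\<beta> - \<alpha>) * int i)" for i
  have "(\<Sum>r = 0..Suc k. of_nat (Suc k choose r) * t ^ r * Y (n + \<alpha> * int (Suc k) + (\<beta> - \<alpha>) * int r))
      = (\<Sum>r \<le> Suc k. of_nat (Suc k choose r) * t ^ r * g r)"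
    unfolding g_def atLeast0AtMost by (simp add: algebra_simps)
  also have "\<dots> = g 0 + (\<Sum>i \<le> k. of_nat (k choose Suc i) * t ^ Suc i * g (Suc i))
       + (\<Sum>i \<le> k. of_nat (k choose i) * t ^ Suc i * g (Suc i))"
    by (subst sum.atMost_Suc_shift) (simp add: sum.distrib algebra_simps)
  also have "g 0 + (\<Sum>i \<le> k. of_nat (k choose Suc i) * t ^ Suc i * g (Suc i))
       = (\<Sum>i \<le> Suc k. of_nat (k choose i) * t ^ i * g i)"
    by (subst sum.atMost_Suc_shift) simp
  also have "\<dots> = (\<Sum>i \<le> k. of_nat (k choose i) * t ^ i * g i)"
    by (simp add: binomial_eq_0)
  also have "\<dots> = s ^ k * Y (n + \<alpha>)"
    using Suc.IH[of "n + \<alpha>"] unfolding g_def by (simp add: atLeast0AtMost algebra_simps)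
  also have "(\<Sum>i \<le> k. of_nat (k choose i) * t ^ Suc i * g (Suc i))
      = t * (\<Sum>i \<le> k. of_nat (k choose i) * t ^ i * Y (n + \<beta> + \<alpha> * int k + (\<beta> - \<alpha>) * int i))"
    unfolding g_def by (simp add: sum_distrib_left algebra_simps)
  also have "\<dots> = t * (s ^ k * Y (n + \<beta>))"
    using Suc.IH[of "n + \<beta>"] by (simp add: atLeast0AtMost)
  also have "s ^ k * Y (n + \<alpha>) + t * (s ^ k * Y (n + \<beta>)) = s ^ k * (Y (n + \<alpha>) + t * Y (n + \<beta>))"
    by (simp add: algebra_simps)
  also have "\<dots> = s ^ Suc k * Y n"
    by (simp only: rel power_Suc mult_ac)
  finally show ?case .
qed

lemma binomial_sum_of_shift_relation_field:
  fixes Y :: "int \<Rightarrow> 'a :: field"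
  assumes "u \<noteq> 0" and "\<And>n. u * Y (n + \<alpha>) + v * Y (n + \<beta>) = w * Y n"
  shows "(\<Sum>r = 0..k. of_nat (k choose r) * (v / u) ^ r * Y (n + \<alpha> * int k + (\<beta> - \<alpha>) * int r))
       = (w / u) ^ k * Y n"
  by (rule binomial_sum_of_shift_relation) (use assms in \<open>simp add: field_simps\<close>)

theorem theorem6:
  fixes X :: "int \<Rightarrow> real" and a b c d e m :: int and k :: nat
  assumes "X \<in> {Fib, Luc, Jac, JacL, Pell, PellL}"
  defines "\<Delta> \<equiv> X (d - a) * X (e - b) - X (e - a) * X (d - b)"
      and "\<Delta>1 \<equiv> X (d - c) * X (e - b) - X (e - c) * X (d - b)"
      and "\<Delta>2 \<equiv> X (d - a) * X (e - c) - X (e - a) * X (d - c)"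
  shows "(\<Delta>2 \<noteq> 0 \<longrightarrow>
           (\<Sum>r = 0..k. real (k choose r) * (\<Delta>1 / \<Delta>2) ^ r
               * X (m - (b - c) * int k + (b - a) * int r)) = (\<Delta> / \<Delta>2) ^ k * X m
         \<and> (\<Sum>r = 0..k. real (k choose r) * (- \<Delta> / \<Delta>2) ^ r
               * X (m + (a - b) * int k + (b - c) * int r)) = (\<Delta>1 / (- \<Delta>2)) ^ k * X m)
       \<and> (\<Delta>1 \<noteq> 0 \<longrightarrow>
           (\<Sum>r = 0..k. real (k choose r) * (- \<Delta> / \<Delta>1) ^ r
               * X (m + (b - a) * int k + (a - c) * int r)) = (\<Delta>2 / (- \<Delta>1)) ^ k * X m)"
proof -
  obtain p q x0 x1 where pq: "p > 0" "q > 0" and "X = lin_seq p q x0 x1"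
    using assms(1) unfolding Fib_def Luc_def Jac_def JacL_def Pell_def PellL_def
    by (auto intro: that[of 1 1] that[of 1 2] that[of 2 1])
  then have rec: "lin_rec p q X" using lin_rec_lin_seq by simp
  have three_term: "\<Delta>1 * X (n - a) + \<Delta>2 * X (n - b) = \<Delta> * X (n - c)"
    if "\<Delta>1 \<noteq> 0 \<or> \<Delta>2 \<noteq> 0" for n
  proof -
    have "d \<noteq> e" using that unfolding \<Delta>1_def \<Delta>2_def by auto
    then show ?thesis
      using lin_rec_three_term[OF pq rec] unfolding \<Delta>_def \<Delta>1_def \<Delta>2_def by blast
  qed
  have rel_c: "\<Delta>2 * X (n + (c - b)) + \<Delta>1 * X (n + (c - a)) = \<Delta> * X n" if "\<Delta>2 \<noteq> 0" for n
    using three_term[of "n + c"] that by (simp add: algebra_simps)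
  have rel_a: "\<Delta>2 * X (n + (a - b)) + - \<Delta> * X (n + (a - c)) = - \<Delta>1 * X n" if "\<Delta>2 \<noteq> 0" for n
    using three_term[of "n + a"] that by (simp add: algebra_simps)
  have rel_b: "\<Delta>1 * X (n + (b - a)) + - \<Delta> * X (n + (b - c)) = - \<Delta>2 * X n" if "\<Delta>1 \<noteq> 0" for n
    using three_term[of "n + b"] that by (simp add: algebra_simps)
  show ?thesis
    using binomial_sum_of_shift_relation_field[OF _ rel_c, of k m]
      binomial_sum_of_shift_relation_field[OF _ rel_a, of k m]
      binomial_sum_of_shift_relation_field[OF _ rel_b, of k m]
    by (simp add: algebra_simps)
qed

end
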